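(* For integers $n\ge1$ and $0\le t\le 3$, let $I_2(n;\xi^t)$ be the number of monic irreducible polynomials $f\in\mathbb{F}_2[x]$ of degree $n$ whose two leading coefficients $([x^{n-1}]f,[x^{n-2}]f)$ equal $(0,0),(1,0),(0,1),(1,1)$ for $t=0,1,2,3$ respectively. Then \begin{align*} I_2(n;\xi^t) &=\frac{[\![t=0]\!]}{n} \sum_{k\mid n}[\![4\mid k]\!]\, \mu(k)2^{n/k} +\frac{[\![2\mid t]\!]}{n} \sum_{k\mid n}[\![4\mid k-2]\!]\, \mu(k)2^{(n/k)-1}\\ &\quad+\frac{1}{n}\sum_{k\mid n}[\![4\mid k-1]\!]\, \mu(k)\left(2^{(n/k)-2}-(-1)^{n/k}2^{(n/2k)-1}\cos\left(\frac{(n/k)-2t}{4}\pi\right)\right)\\ &\quad+\frac{1}{n}\sum_{k\mid n}[\![4\mid k+1]\!]\, \mu(k)\left(2^{(n/k)-2}-(-1)^{n/k}2^{(n/2k)-1}\cos\left(\frac{(n/k)+2t}{4}\pi\right)\right), \end{align*} where the sums are over positive divisors $k$ of $n$.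
   Context: Coefficients $[x^{m}]f$ with $m<0$ are taken to be $0$ (so for $n=1$ the condition concerns only $[x^{0}]$ and $[x^{-1}]f=0$). The labeling corresponds to the class of $(x+1)^t$ in the group of polynomials modulo agreement of the two leading coefficients. $\mu$ is the Möbius function and $[\![P]\!]$ is $1$ if $P$ is true and $0$ otherwise. *)

theory Defs
  imports Complex_Main "HOL-Library.Z2" "HOL-Computational_Algebra.Polynomial"
    "HOL-Computational_Algebra.Squarefree" "HOL-Computational_Algebra.Primes"
begin

definition icoeff :: "'a::zero poly \<Rightarrow> int \<Rightarrow> 'a" where
  "icoeff f m = (if m < 0 then 0 else coeff f (nat m))"

definition moebius :: "nat \<Rightarrow> int" where
  "moebius k = (if squarefree k then (-1) ^ card (prime_factors k) else 0)"

definition iv :: "bool \<Rightarrow> real" where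
  "iv P = (if P then 1 else 0)"

definition I2 :: "nat \<Rightarrow> bit \<Rightarrow> bit \<Rightarrow> nat" where
  "I2 n a b = card {f :: bit poly. degree f = n \<and> lead_coeff f = 1 \<and> irreducible f
      \<and> icoeff f (int n - 1) = a \<and> icoeff f (int n - 2) = b}"

end

theory Submission
  imports Defs "HOL-Computational_Algebra.Polynomial_Factorial" "HOL-Computational_Algebra.Field_as_Ring"
begin

text \<open>Reversing a nonzero \<open>f\<close> and reducing modulo \<open>x\<^sup>3\<close> is a homomorphism onto the cyclic group
  \<open>(\<bbbF>\<^sub>2[x]/x\<^sup>3)\<^sup>\<times>\<close> of order 4 generated by \<open>\<xi> = 1 + x\<close>; the image of \<open>f\<close> is read off its two
  leading coefficients. Orthogonality of the four characters \<open>\<chi>\<^sub>j(\<xi>) = \<i>\<^sup>j\<close> reduces the count to the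
  sums \<open>G\<^sub>j(n)\<close> of \<open>\<chi>\<^sub>j\<close> over irreducibles of degree \<open>n\<close>. For \<open>j \<noteq> 0\<close> the sum of \<open>\<chi>\<^sub>j\<close> over monic
  polynomials of degree \<open>d \<ge> 2\<close> vanishes, because adding suitable lower terms multiplies the class by
  \<open>\<xi>\<close>; so the \<open>L\<close>-function \<open>\<Sum>\<^sub>f \<chi>\<^sub>j(f) u\<^sup>d\<^sup>e\<^sup>g \<^sup>f\<close> is \<open>1 + (1 + \<i>\<^sup>j) u\<close>, and \<open>1/(1 - 2u)\<close> for \<open>j = 0\<close>.
  Comparing its logarithmic derivative with the Euler product evaluates the prime power sums
  \<open>\<Sum>\<^sub>d\<^sub>|\<^sub>m d G\<^sub>j\<^sub>m\<^sub>/\<^sub>d(d)\<close>, Moebius inversion recovers \<open>n G\<^sub>j(n)\<close>, and \<open>1 \<plusminus> \<i> = \<surd>2 e\<^sup>\<plusminus>\<^sup>i\<^sup>\<pi>\<^sup>/\<^sup>4\<close>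
  produces the cosines.\<close>

lemma irreducible_degree_pos: "irreducible (p :: 'a::field poly) \<Longrightarrow> 0 < degree p"
  by (metis irreducible_def is_unit_iff_degree neq0_conv)

lemma degree_eq_sum_prime_factors:
  fixes f :: "'a::field_gcd poly"
  assumes "f \<noteq> 0"
  shows "degree f = (\<Sum>P\<in>prime_factors f. multiplicity P f * degree P)"
proof -
  have "degree f = degree (\<Prod>P\<in>prime_factors f. P ^ multiplicity P f)"
    using prod_prime_factors [OF assms] assms
    by (simp add: antisym dvd_imp_degree_le)
  also have "\<dots> = (\<Sum>P\<in>prime_factors f. degree (P ^ multiplicity P f))"
    by (rule degree_prod_sum_eq) auto
  also have "\<dots> = (\<Sum>P\<in>prime_factors f. multiplicity P f * degree P)"
    by (intro sum.cong refl) (auto simp: degree_power_eq dest!: in_prime_factors_imp_prime)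
  finally show ?thesis .
qed

lemma degree_eq_sum_prime_power_divisors:
  fixes f :: "'a::field_gcd poly"
  assumes "f \<noteq> 0"
  shows "degree f = (\<Sum>(P, k)\<in>{(P, k). prime P \<and> 1 \<le> k \<and> P ^ k dvd f}. degree P)"
proof -
  have "{(P, k). prime P \<and> 1 \<le> k \<and> P ^ k dvd f} = Sigma (prime_factors f) (\<lambda>P. {1..multiplicity P f})"
    using assms by (auto simp: in_prime_factors_iff power_dvd_iff_le_multiplicity
        intro: dvd_trans [OF dvd_power])
  then show ?thesis
    by (simp add: sum.Sigma [symmetric] degree_eq_sum_prime_factors [OF assms])
qed

lemma polys_degree_less_eq_image_Poly:
  assumes "0 < n"
  shows "{p :: 'a::zero poly. degree p < n} = Poly ` {xs. length xs = n}"
proof (intro set_eqI iffI)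
  fix p :: "'a poly"
  assume "p \<in> {p. degree p < n}"
  then have "p = Poly (map (coeff p) [0..<n])"
    by (intro poly_eqI) (auto simp: nth_default_def coeff_eq_0)
  then show "p \<in> Poly ` {xs. length xs = n}"
    by auto
next
  fix p :: "'a poly"
  assume "p \<in> Poly ` {xs. length xs = n}"
  then obtain xs where "length xs = n" "p = Poly xs"
    by auto
  moreover have "degree (Poly xs) \<le> length xs - 1"
    by (rule degree_le) (auto simp: nth_default_def)
  ultimately show "p \<in> {p. degree p < n}"
    using assms by auto
qed

lemma inj_on_Poly_length: "inj_on Poly {xs :: 'a::zero list. length xs = n}"
proof (rule inj_onI)
  fix xs ys :: "'a list"
  assume lengths: "xs \<in> {xs. length xs = n}" "ys \<in> {xs. length xs = n}"
    and eq: "Poly xs = Poly ys"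
  have "xs ! i = ys ! i" if "i < n" for i
  proof -
    have "nth_default 0 xs i = nth_default 0 ys i"
      by (metis eq coeff_Poly_eq)
    with that lengths show ?thesis
      by (simp add: nth_default_def)
  qed
  with lengths show "xs = ys"
    by (auto intro: nth_equalityI)
qed

lemma finite_polys_degree_less:
  assumes "finite (UNIV :: 'a::zero set)"
  shows "finite {p :: 'a poly. degree p < n}"
  using finite_lists_length_eq [OF assms, of n]
  by (cases "n = 0") (simp_all add: polys_degree_less_eq_image_Poly)

lemma card_polys_degree_less:
  assumes "finite (UNIV :: 'a::zero set)" "0 < n"
  shows "card {p :: 'a poly. degree p < n} = card (UNIV :: 'a set) ^ n"
  using card_lists_length_eq [OF assms(1), of n] assms(2)
  by (simp add: polys_degree_less_eq_image_Poly card_image [OF inj_on_Poly_length])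

lemma coeff_1_2_mult:
  fixes p q :: "'a::comm_semiring_1 poly"
  assumes "coeff p 0 = 1" "coeff q 0 = 1"
  shows "coeff (p * q) 1 = coeff p 1 + coeff q 1"
    and "coeff (p * q) 2 = coeff p 2 + coeff p 1 * coeff q 1 + coeff q 2"
  using assms by (simp_all add: coeff_mult numeral_2_eq_2 atMost_Suc add.assoc)

lemma power_i_mod_4: "\<i> ^ n = \<i> ^ (n mod 4)"
proof -
  have "\<i> ^ n = \<i> ^ (n mod 4) * (\<i> ^ 4) ^ (n div 4)"
    by (metis mod_mult_div_eq power_add power_mult)
  also have "\<i> ^ 4 = 1"
    by (simp add: numeral_eq_Suc)
  finally show ?thesis
    by simp
qed

lemma power_i_eq_1_iff: "\<i> ^ n = 1 \<longleftrightarrow> 4 dvd n"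
proof
  assume "4 dvd n"
  then show "\<i> ^ n = 1"
    by (simp add: power_i_mod_4 [of n] dvd_eq_mod_eq_0)
next
  assume "\<i> ^ n = 1"
  show "4 dvd n"
  proof (rule ccontr)
    assume "\<not> 4 dvd n"
    then have "n mod 4 = 1 \<or> n mod 4 = 2 \<or> n mod 4 = 3"
      by presburger
    moreover have "\<i> ^ 1 \<noteq> 1" "\<i> ^ 2 \<noteq> 1" "\<i> ^ 3 \<noteq> 1"
      by (simp_all add: power3_eq_cube complex_eq_iff)
    ultimately show False
      using \<open>\<i> ^ n = 1\<close> power_i_mod_4 [of n] by auto
  qed
qed

lemma sum_power_i: "(\<Sum>j<4. \<i> ^ (j * x)) = (if 4 dvd x then 4 else 0)"
proof -
  have "(\<Sum>j<4. \<i> ^ (j * x)) = (\<Sum>j<4. (\<i> ^ x) ^ j)"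
    by (simp add: power_mult [symmetric] mult.commute)
  also have "\<dots> = (if 4 dvd x then 4 else 0)"
  proof (cases "4 dvd x")
    case True
    then have "\<i> ^ x = 1"
      by (simp add: power_i_eq_1_iff)
    with True show ?thesis
      by simp
  next
    case False
    then have "\<i> ^ x \<noteq> 1" "(\<i> ^ x) ^ 4 = 1"
      by (simp_all add: power_i_eq_1_iff flip: power_mult)
    with False show ?thesis
      by (simp add: sum_gp_strict)
  qed
  finally show ?thesis .
qed

lemma power_i_4_minus:
  assumes "t \<le> 3"
  shows "\<i> ^ (4 - t) = cis (- (real t * pi / 2))"
    and "(\<i> ^ (4 - t)) ^ 3 = cis (real t * pi / 2)"
proof -
  have "\<i> ^ t = cis (real t * pi / 2)"
    using DeMoivre [of "pi / 2" t] by simp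
  moreover have "\<i> ^ (4 - t) * \<i> ^ t = 1"
    using assms by (simp add: power_add [symmetric] power_i_eq_1_iff)
  ultimately show omega: "\<i> ^ (4 - t) = cis (- (real t * pi / 2))"
    by (simp add: field_simps cis_inverse [symmetric])
  have "(\<i> ^ (4 - t)) ^ 3 * \<i> ^ (4 - t) = (\<i> ^ (4 - t)) ^ (3 + 1)"
    by (simp only: power_add power_one_right)
  also have "\<dots> = \<i> ^ ((4 - t) * 4)"
    by (simp add: power_mult)
  also have "\<dots> = 1"
    by (subst power_i_eq_1_iff) simp
  finally show "(\<i> ^ (4 - t)) ^ 3 = cis (real t * pi / 2)"
    by (simp add: omega field_simps cis_inverse [symmetric])
qed

lemma cis_one_plus_i_power_add_conj:
  "cis a * (1 + \<i>) ^ m + cis (- a) * (1 - \<i>) ^ m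
    = complex_of_real (2 * sqrt 2 ^ m * cos (a + real m * pi / 4))"
proof -
  have one_plus_i: "1 + \<i> = complex_of_real (sqrt 2) * cis (pi / 4)"
    and one_minus_i: "1 - \<i> = complex_of_real (sqrt 2) * cis (- (pi / 4))"
    by (simp_all add: complex_eq_iff cos_45 sin_45)
  have "cis a * (1 + \<i>) ^ m = complex_of_real (sqrt 2 ^ m) * cis (a + real m * pi / 4)"
    unfolding one_plus_i by (simp add: power_mult_distrib DeMoivre cis_mult)
  moreover have "cis (- a) * (1 - \<i>) ^ m = complex_of_real (sqrt 2 ^ m) * cis (- (a + real m * pi / 4))"
    unfolding one_minus_i by (simp add: power_mult_distrib DeMoivre cis_mult algebra_simps)
  ultimately have "cis a * (1 + \<i>) ^ m + cis (- a) * (1 - \<i>) ^ m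
      = complex_of_real (sqrt 2 ^ m) * (cis (a + real m * pi / 4) + cis (- (a + real m * pi / 4)))"
    by (simp add: algebra_simps)
  also have "cis x + cis (- x) = complex_of_real (2 * cos x)" for x
    by (simp add: complex_eq_iff)
  finally show ?thesis
    by (simp add: algebra_simps)
qed

section \<open>The Moebius function\<close>

lemma sum_Pow_neg_one_power_card:
  assumes "finite A"
  shows "(\<Sum>X\<in>Pow A. (-1 :: int) ^ card X) = (if A = {} then 1 else 0)"
proof -
  have "(\<Sum>X\<in>Pow A. (-1 :: int) ^ card X) = (\<Prod>x\<in>A. 1 - 1)"
    using prod_diff_conv_sum [OF assms, of "\<lambda>_. 1 :: int" "\<lambda>_. 1"] by simp
  with assms show ?thesis
    by (simp add: power_0_left card_eq_0_iff)
qed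

lemma prime_factors_prod_primes:
  assumes "finite T" "\<And>p. p \<in> T \<Longrightarrow> prime (p :: nat)"
  shows "prime_factors (\<Prod>T) = T"
proof safe
  fix p
  assume "p \<in> prime_factors (\<Prod>T)"
  then have p: "prime p" "p dvd \<Prod>T"
    by auto
  then obtain q where "q \<in> T" "p dvd q"
    using prime_dvd_prod_iff [OF assms(1) p(1)] by auto
  with p assms(2) show "p \<in> T"
    using primes_dvd_imp_eq by metis
next
  fix p
  assume "p \<in> T"
  moreover have "\<Prod>T \<noteq> 0"
    using assms by (metis prod_zero_iff not_prime_0)
  ultimately show "p \<in> prime_factors (\<Prod>T)"
    using assms by (auto simp: in_prime_factors_iff dvd_prodI)
qed

lemma squarefree_prod_primes:
  assumes "finite T" "\<And>p. p \<in> T \<Longrightarrow> prime (p :: nat)"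
  shows "squarefree (\<Prod>T)"
  by (rule squarefree_prod_coprime) (auto intro: primes_coprime squarefree_prime assms)

lemma prod_prime_factors_squarefree:
  assumes "squarefree (k :: nat)" "0 < k"
  shows "\<Prod>(prime_factors k) = k"
proof -
  have "multiplicity p k = 1" if "p \<in> prime_factors k" for p
    using squarefree_factorial_semiring' [of k] assms that by auto
  with prod_prime_factors [of k] assms show ?thesis
    by simp
qed

text \<open>Squarefree divisors of \<open>n\<close> correspond to sets of prime factors of \<open>n\<close>.\<close>

lemma sum_moebius_divisors:
  assumes "1 \<le> n"
  shows "(\<Sum>k | k dvd n. moebius k) = (if n = 1 then 1 else 0)"
proof -
  have "(\<Sum>k | k dvd n. moebius k) = (\<Sum>k | k dvd n \<and> squarefree k. (-1) ^ card (prime_factors k))"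
    using assms by (intro sum.mono_neutral_cong_right) (auto simp: moebius_def)
  also have "\<dots> = (\<Sum>T\<in>Pow (prime_factors n). (-1) ^ card T)"
  proof (rule sum.reindex_bij_witness [where i = Prod and j = prime_factors])
    fix k
    assume k: "k \<in> {k. k dvd n \<and> squarefree k}"
    with assms have "0 < k"
      by (auto intro: gr0I)
    with k show "\<Prod>(prime_factors k) = k" "prime_factors k \<in> Pow (prime_factors n)"
      using assms by (auto simp: prod_prime_factors_squarefree in_prime_factors_iff intro: dvd_trans)
  next
    fix T
    assume "T \<in> Pow (prime_factors n)"
    then have T: "finite T" "\<And>p. p \<in> T \<Longrightarrow> prime p" "T \<subseteq> prime_factors n"
      using finite_subset [of T "prime_factors n"] by auto
    show "prime_factors (\<Prod>T) = T"
      using T(1,2) by (rule prime_factors_prod_primes)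
    have "\<Prod>T dvd (\<Prod>p\<in>prime_factors n. p ^ multiplicity p n)"
      using T(3) by (intro prod_dvd_prod_subset2 [OF finite_set_mset T(3)])
        (auto simp: prime_factors_multiplicity intro: dvd_power)
    also have "\<dots> = n"
      using prod_prime_factors [of n] assms by simp
    finally show "\<Prod>T \<in> {k. k dvd n \<and> squarefree k}"
      using squarefree_prod_primes [OF T(1,2)] by simp
  qed simp
  also have "\<dots> = (if n = 1 then 1 else 0)"
    using assms prime_factorization_empty_iff [of n] by (simp add: sum_Pow_neg_one_power_card)
  finally show ?thesis .
qed

lemma moebius_inversion:
  fixes f :: "nat \<Rightarrow> 'a::comm_ring_1"
  assumes "1 \<le> n"
  shows "(\<Sum>k | k dvd n. of_int (moebius k) * (\<Sum>e | e dvd n div k. f e)) = f n"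
proof -
  let ?D = "{k. k dvd n}"
  have fin: "finite ?D"
    using assms by simp
  have divisors_div: "{e. e dvd n div k} = {e \<in> ?D. k * e dvd n}" if "k dvd n" for k
    using that assms by (auto simp: dvd_div_iff_mult mult.commute intro: dvd_mult_left)
  have "(\<Sum>k\<in>?D. of_int (moebius k) * (\<Sum>e | e dvd n div k. f e))
      = (\<Sum>k\<in>?D. \<Sum>e\<in>{e \<in> ?D. k * e dvd n}. of_int (moebius k) * f e)"
    by (intro sum.cong refl) (simp add: divisors_div sum_distrib_left)
  also have "\<dots> = (\<Sum>e\<in>?D. \<Sum>k\<in>{k \<in> ?D. k * e dvd n}. of_int (moebius k) * f e)"
    by (rule sum.swap_restrict [OF fin fin])
  also have "\<dots> = (\<Sum>e\<in>?D. of_int (\<Sum>k | k dvd n div e. moebius k) * f e)"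
  proof (intro sum.cong refl)
    fix e
    assume "e \<in> ?D"
    then have "{k \<in> ?D. k * e dvd n} = {k. k dvd n div e}"
      using divisors_div [of e] by (auto simp: mult.commute)
    then show "(\<Sum>k\<in>{k \<in> ?D. k * e dvd n}. of_int (moebius k) * f e)
        = of_int (\<Sum>k | k dvd n div e. moebius k) * f e"
      by (simp add: sum_distrib_right)
  qed
  also have "\<dots> = (\<Sum>e\<in>?D. if e = n then f e else 0)"
  proof (intro sum.cong refl)
    fix e
    assume "e \<in> ?D"
    with assms have "1 \<le> n div e" "n div e = 1 \<longleftrightarrow> e = n"
      by (auto simp: Suc_le_eq div_greater_zero_iff dvd_imp_le dvd_div_eq_mult)
    then show "of_int (\<Sum>k | k dvd n div e. moebius k) * f e = (if e = n then f e else 0)"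
      by (simp add: sum_moebius_divisors)
  qed
  also have "\<dots> = f n"
    using fin by simp
  finally show ?thesis .
qed

section \<open>Polynomials over \<open>\<bbbF>\<^sub>2\<close>\<close>

text \<open>As in \<open>Field_as_Ring\<close>, so that \<open>bit poly\<close> becomes a factorial ring.\<close>

instantiation bit ::
  "{unique_euclidean_ring, normalization_euclidean_semiring, normalization_semidom_multiplicative}"
begin
definition [simp]: "normalize_bit = (normalize_field :: bit \<Rightarrow> _)"
definition [simp]: "unit_factor_bit = (unit_factor_field :: bit \<Rightarrow> _)"
definition [simp]: "euclidean_size_bit = (euclidean_size_field :: bit \<Rightarrow> _)"
definition [simp]: "division_segment (x :: bit) = 1"
instance
  by standard (auto simp add: dvd_field_iff field_split_simps split: if_splits)
end

instantiation bit :: euclidean_ring_gcd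
begin
definition gcd_bit :: "bit \<Rightarrow> bit \<Rightarrow> bit" where "gcd_bit = Euclidean_Algorithm.gcd"
definition lcm_bit :: "bit \<Rightarrow> bit \<Rightarrow> bit" where "lcm_bit = Euclidean_Algorithm.lcm"
definition Gcd_bit :: "bit set \<Rightarrow> bit" where "Gcd_bit = Euclidean_Algorithm.Gcd"
definition Lcm_bit :: "bit set \<Rightarrow> bit" where "Lcm_bit = Euclidean_Algorithm.Lcm"
instance by standard (simp_all add: gcd_bit_def lcm_bit_def Gcd_bit_def Lcm_bit_def)
end

instance bit :: field_gcd ..

lemma UNIV_bit: "(UNIV :: bit set) = {0, 1}"
  by (auto intro: bit.exhaust)

lemma finite_UNIV_bit: "finite (UNIV :: bit set)"
  by (simp add: UNIV_bit)

lemma card_UNIV_bit: "card (UNIV :: bit set) = 2"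
  unfolding UNIV_bit by simp

lemma lead_coeff_bit_poly: "(p :: bit poly) \<noteq> 0 \<Longrightarrow> lead_coeff p = 1"
  by (metis leading_coeff_0_iff bit_not_zero_iff)

lemma normalize_bit_poly: "normalize (p :: bit poly) = p"
  by (cases "p = 0") (simp_all add: normalize_poly_def lead_coeff_bit_poly one_pCons [symmetric])

lemma prime_bit_poly_iff_irreducible: "prime (p :: bit poly) \<longleftrightarrow> irreducible p"
  by (simp add: prime_def prime_elem_iff_irreducible normalize_bit_poly)

definition monics :: "nat \<Rightarrow> bit poly set" where
  "monics d = {f. degree f = d \<and> lead_coeff f = 1}"

lemma in_monics_iff: "f \<in> monics d \<longleftrightarrow> degree f = d \<and> f \<noteq> 0"
  using lead_coeff_bit_poly by (auto simp: monics_def)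

lemma finite_monics: "finite (monics d)"
  by (rule finite_subset [OF _ finite_polys_degree_less [OF finite_UNIV_bit, of "Suc d"]]) (auto simp: monics_def)

lemma monics_0: "monics 0 = {1}"
  by (auto simp: monics_def one_pCons elim!: degree_eq_zeroE)

lemma monics_1: "monics 1 = {[:0, 1:], [:1, 1:]}"
proof -
  have "monics 1 = range (\<lambda>a. [:a, 1:])"
  proof (intro set_eqI iffI)
    fix p
    assume "p \<in> monics 1"
    then have "degree p = 1" "lead_coeff p = 1"
      unfolding monics_def by blast+
    then obtain a where "p = [:a, 1:]"
      by (elim degree1_coeffs) simp
    then show "p \<in> range (\<lambda>a. [:a, 1:])"
      by blast
  qed (auto simp: monics_def)
  then show ?thesis
    by (simp add: UNIV_bit)
qed

lemma card_monics: "card (monics d) = 2 ^ d"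
proof (cases "d = 0")
  case False
  have "{p :: bit poly. degree p < Suc d} = monics d \<union> {p. degree p < d}"
    "monics d \<inter> {p. degree p < d} = {}"
    using False by (auto simp: in_monics_iff)
  then have "card {p :: bit poly. degree p < Suc d} = card (monics d) + card {p :: bit poly. degree p < d}"
    by (simp add: card_Un_disjoint finite_monics finite_polys_degree_less [OF finite_UNIV_bit])
  with False show ?thesis
    by (simp add: card_polys_degree_less [OF finite_UNIV_bit] card_UNIV_bit)
qed (simp add: monics_0)

definition irreducibles :: "nat \<Rightarrow> bit poly set" where
  "irreducibles d = {P. degree P = d \<and> irreducible P}"

lemma finite_irreducibles: "finite (irreducibles d)"
  by (rule finite_subset [OF _ finite_monics [of d]])
    (auto simp: irreducibles_def in_monics_iff)

section \<open>The characters of \<open>(\<bbbF>\<^sub>2[x]/x\<^sup>3)\<^sup>\<times>\<close>\<close>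

text \<open>Since \<open>\<xi>\<^sup>t = (1 + x)\<^sup>t\<close> has coefficients \<open>t mod 2\<close> and \<open>t div 2\<close> at \<open>x\<close> and \<open>x\<^sup>2\<close> for \<open>t < 4\<close>,
  \<open>xi_index f\<close> is the \<open>t\<close> with \<open>reflect_poly f \<equiv> \<xi>\<^sup>t (mod x\<^sup>3)\<close>.\<close>

definition xi_index :: "bit poly \<Rightarrow> nat" where
  "xi_index f = of_bool (coeff (reflect_poly f) 1 = 1) + 2 * of_bool (coeff (reflect_poly f) 2 = 1)"

lemma xi_index_le_3: "xi_index f \<le> 3"
  by (simp add: xi_index_def)

lemma xi_index_eq_iff:
  assumes "t \<le> 3"
  shows "xi_index f = t \<longleftrightarrow>
    coeff (reflect_poly f) 1 = of_nat (t mod 2) \<and> coeff (reflect_poly f) 2 = of_nat (t div 2)"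
proof -
  have "t = 0 \<or> t = 1 \<or> t = 2 \<or> t = 3"
    using assms by auto
  then show ?thesis
    unfolding xi_index_def
    by (cases "coeff (reflect_poly f) 1"; cases "coeff (reflect_poly f) 2") auto
qed

lemma xi_index_mult:
  assumes "(f :: bit poly) \<noteq> 0" "g \<noteq> 0"
  shows "xi_index (f * g) mod 4 = (xi_index f + xi_index g) mod 4"
proof -
  let ?a = "coeff (reflect_poly f)" and ?b = "coeff (reflect_poly g)"
  have "?a 0 = 1" "?b 0 = 1"
    using assms by (simp_all add: lead_coeff_bit_poly)
  \<comment> \<open>the product \<open>?a 1 * ?b 1\<close> is the carry that makes \<open>a + 2b\<close> add modulo 4\<close>
  then have "coeff (reflect_poly (f * g)) 1 = ?a 1 + ?b 1"
    "coeff (reflect_poly (f * g)) 2 = ?a 2 + ?a 1 * ?b 1 + ?b 2"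
    unfolding reflect_poly_mult by (rule coeff_1_2_mult)+
  then show ?thesis
    unfolding xi_index_def by (cases "?a 1"; cases "?a 2"; cases "?b 1"; cases "?b 2") simp_all
qed

definition xi_char :: "nat \<Rightarrow> bit poly \<Rightarrow> complex" where
  "xi_char j f = \<i> ^ (j * xi_index f)"

lemma xi_char_mult:
  assumes "(f :: bit poly) \<noteq> 0" "g \<noteq> 0"
  shows "xi_char j (f * g) = xi_char j f * xi_char j g"
proof -
  have "(j * xi_index (f * g)) mod 4 = (j * (xi_index f + xi_index g)) mod 4"
    by (metis xi_index_mult [OF assms] mod_mult_right_eq)
  then have "\<i> ^ (j * xi_index (f * g)) = \<i> ^ (j * (xi_index f + xi_index g))"
    by (metis power_i_mod_4)
  then show ?thesis
    by (simp add: xi_char_def distrib_left power_add)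
qed

lemma xi_char_1 [simp]: "xi_char j 1 = 1"
  by (simp add: xi_char_def xi_index_def)

lemma xi_char_power: "(P :: bit poly) \<noteq> 0 \<Longrightarrow> xi_char j (P ^ k) = xi_char j P ^ k"
  by (induction k) (simp_all add: xi_char_mult)

lemma power_xi_char: "xi_char j P ^ k = xi_char (j * k) P"
  by (simp add: xi_char_def power_mult [symmetric] mult_ac)

lemma xi_char_trivial: "4 dvd j \<Longrightarrow> xi_char j f = 1"
  by (simp add: xi_char_def power_i_eq_1_iff)

definition char_sum :: "nat \<Rightarrow> nat \<Rightarrow> complex" where
  "char_sum j d = (\<Sum>f\<in>monics d. xi_char j f)"

lemma char_sum_0: "char_sum j 0 = 1"
  by (simp add: char_sum_def monics_0)

lemma char_sum_1: "char_sum j 1 = 1 + \<i> ^ j"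
  unfolding char_sum_def monics_1 by (simp add: xi_char_def xi_index_def coeff_reflect_poly)

lemma char_sum_trivial: "4 dvd j \<Longrightarrow> char_sum j d = 2 ^ d"
  by (simp add: char_sum_def xi_char_trivial card_monics)

text \<open>For \<open>d \<ge> 2\<close>, adding \<open>x\<^sup>d\<^sup>-\<^sup>1 + a x\<^sup>d\<^sup>-\<^sup>2\<close>, where \<open>a\<close> is the coefficient of \<open>x\<^sup>d\<^sup>-\<^sup>1\<close> in \<open>f\<close>,
  multiplies the class of \<open>f\<close> by \<open>\<xi>\<close>.\<close>

definition xi_shift :: "nat \<Rightarrow> bit poly \<Rightarrow> bit poly" where
  "xi_shift d f = f + monom 1 (d - 1) + monom (coeff f (d - 1)) (d - 2)"

lemma coeff_xi_shift:
  assumes "2 \<le> d"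
  shows "coeff (xi_shift d f) (d - 1) = coeff f (d - 1) + 1"
    and "coeff (xi_shift d f) (d - 2) = coeff f (d - 2) + coeff f (d - 1)"
  using assms by (simp_all add: xi_shift_def coeff_monom)

lemma xi_shift_in_monics:
  assumes "f \<in> monics d" "2 \<le> d"
  shows "xi_shift d f \<in> monics d"
proof -
  have "degree (monom (1 :: bit) (d - 1) + monom (coeff f (d - 1)) (d - 2)) < d"
    using assms(2) by (intro degree_add_less) (auto intro: le_less_trans [OF degree_monom_le])
  then have "degree (xi_shift d f) = d"
    using assms(1) by (simp add: xi_shift_def add.assoc in_monics_iff degree_add_eq_left)
  with assms(2) show ?thesis
    by (auto simp: in_monics_iff)
qed

lemma xi_char_xi_shift:
  assumes "f \<in> monics d" "2 \<le> d"
  shows "xi_char j (xi_shift d f) = \<i> ^ j * xi_char j f"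
proof -
  have "degree (xi_shift d f) = d" "degree f = d"
    using xi_shift_in_monics [OF assms] assms(1) by (simp_all add: in_monics_iff)
  then have "coeff (reflect_poly (xi_shift d f)) 1 = coeff (reflect_poly f) 1 + 1"
    "coeff (reflect_poly (xi_shift d f)) 2 = coeff (reflect_poly f) 2 + coeff (reflect_poly f) 1"
    using assms(2) coeff_xi_shift [OF assms(2), of f] by (simp_all add: coeff_reflect_poly)
  then have "xi_index (xi_shift d f) mod 4 = (xi_index f + 1) mod 4"
    unfolding xi_index_def
    by (cases "coeff (reflect_poly f) 1"; cases "coeff (reflect_poly f) 2") simp_all
  then have "(j * xi_index (xi_shift d f)) mod 4 = (j + j * xi_index f) mod 4"
    by (metis mod_mult_right_eq distrib_left mult_1_right add.commute)
  then show ?thesis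
    by (metis xi_char_def power_i_mod_4 power_add)
qed

lemma inj_on_xi_shift: "2 \<le> d \<Longrightarrow> inj_on (xi_shift d) (monics d)"
proof (rule inj_onI)
  fix f g
  assume "2 \<le> d" and eq: "xi_shift d f = xi_shift d g"
  then have "coeff f (d - 1) = coeff g (d - 1)"
    by (metis coeff_xi_shift(1) add_right_cancel)
  with eq show "f = g"
    by (simp add: xi_shift_def)
qed

lemma char_sum_nontrivial:
  assumes "2 \<le> d" "\<not> 4 dvd j"
  shows "char_sum j d = 0"
proof -
  have inj: "inj_on (xi_shift d) (monics d)"
    using assms(1) by (rule inj_on_xi_shift)
  then have "xi_shift d ` monics d = monics d"
    using xi_shift_in_monics assms(1) by (intro endo_inj_surj finite_monics) auto
  then have "char_sum j d = (\<Sum>f\<in>xi_shift d ` monics d. xi_char j f)"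
    by (simp add: char_sum_def)
  also have "\<dots> = (\<Sum>f\<in>monics d. xi_char j (xi_shift d f))"
    by (simp add: sum.reindex [OF inj])
  also have "\<dots> = \<i> ^ j * char_sum j d"
    using assms(1) by (simp add: char_sum_def sum_distrib_left xi_char_xi_shift)
  finally have "(1 - \<i> ^ j) * char_sum j d = 0"
    by (simp add: algebra_simps)
  with assms(2) show ?thesis
    by (simp add: power_i_eq_1_iff)
qed

section \<open>Prime power sums\<close>

definition prime_powers_upto :: "nat \<Rightarrow> (bit poly \<times> nat) set" where
  "prime_powers_upto d = {(P, k). irreducible P \<and> 1 \<le> k \<and> k * degree P \<le> d}"

definition prime_powers_of_degree :: "nat \<Rightarrow> (bit poly \<times> nat) set" where
  "prime_powers_of_degree m = {(P, k). irreducible P \<and> 1 \<le> k \<and> k * degree P = m}"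

lemma finite_prime_powers_upto: "finite (prime_powers_upto d)"
proof (rule finite_subset)
  show "prime_powers_upto d \<subseteq> {P. degree P < Suc d} \<times> {..d}"
  proof safe
    fix P k
    assume "(P, k) \<in> prime_powers_upto d"
    then have "irreducible P" "1 \<le> k" "k * degree P \<le> d"
      by (auto simp: prime_powers_upto_def)
    moreover from this have "1 \<le> degree P"
      by (simp add: irreducible_degree_pos Suc_leI)
    ultimately have "degree P \<le> k * degree P" "k \<le> k * degree P"
      by simp_all
    with \<open>k * degree P \<le> d\<close> show "degree P < Suc d" "k \<le> d"
      by linarith+
  qed
qed (simp add: finite_polys_degree_less [OF finite_UNIV_bit])

definition prime_power_sum :: "nat \<Rightarrow> nat \<Rightarrow> complex" where
  "prime_power_sum j m = (\<Sum>(P, k)\<in>prime_powers_of_degree m. of_nat (degree P) * xi_char j P ^ k)"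

lemma degree_eq_sum_prime_powers_upto:
  assumes "f \<in> monics d"
  shows "d = (\<Sum>(P, k)\<in>{(P, k) \<in> prime_powers_upto d. P ^ k dvd f}. degree P)"
proof -
  have "{(P, k). prime P \<and> 1 \<le> k \<and> P ^ k dvd f} = {(P, k) \<in> prime_powers_upto d. P ^ k dvd f}"
  proof safe
    fix P k
    assume P: "prime P" "1 \<le> k" "P ^ k dvd f"
    then have "degree (P ^ k) \<le> degree f"
      using assms by (intro dvd_imp_degree_le) (auto simp: in_monics_iff)
    with P assms show "(P, k) \<in> prime_powers_upto d"
      by (auto simp: prime_powers_upto_def prime_bit_poly_iff_irreducible in_monics_iff degree_power_eq)
  qed (auto simp: prime_powers_upto_def prime_bit_poly_iff_irreducible)
  with degree_eq_sum_prime_power_divisors [of f] assms show ?thesis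
    by (simp add: in_monics_iff)
qed

lemma sum_xi_char_multiples:
  assumes "irreducible P" "1 \<le> k" "k * degree P \<le> d"
  shows "(\<Sum>f\<in>{f \<in> monics d. P ^ k dvd f}. xi_char j f) = xi_char j P ^ k * char_sum j (d - k * degree P)"
proof -
  have "P \<noteq> 0"
    using assms(1) by auto
  have "{f \<in> monics d. P ^ k dvd f} = (\<lambda>g. P ^ k * g) ` monics (d - k * degree P)"
  proof safe
    fix f
    assume f: "f \<in> monics d" "P ^ k dvd f"
    then obtain g where g: "f = P ^ k * g"
      by (elim dvdE)
    with f(1) \<open>P \<noteq> 0\<close> have "g \<in> monics (d - k * degree P)"
      by (auto simp: in_monics_iff degree_mult_eq degree_power_eq)
    with g show "f \<in> (\<lambda>g. P ^ k * g) ` monics (d - k * degree P)"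
      by blast
  next
    fix g
    assume "g \<in> monics (d - k * degree P)"
    with \<open>P \<noteq> 0\<close> assms(3) show "P ^ k * g \<in> monics d"
      by (auto simp: in_monics_iff degree_mult_eq degree_power_eq)
  qed simp
  moreover have "inj_on (\<lambda>g. P ^ k * g) (monics (d - k * degree P))"
    using \<open>P \<noteq> 0\<close> by (auto intro: inj_onI)
  ultimately show ?thesis
    using \<open>P \<noteq> 0\<close>
    by (simp add: sum.reindex char_sum_def sum_distrib_left xi_char_mult xi_char_power in_monics_iff)
qed

text \<open>The coefficientwise form of \<open>u L'(u) = L(u) \<Sum>\<^sub>m \<Lambda>(m) u\<^sup>m\<close> for the \<open>L\<close>-function
  \<open>L(u) = \<Sum>\<^sub>d char_sum j d u\<^sup>d = \<Prod>\<^sub>P (1 - xi_char j P u\<^sup>d\<^sup>e\<^sup>g \<^sup>P)\<^sup>-\<^sup>1\<close>.\<close>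

lemma degree_weighted_char_sum:
  "of_nat d * char_sum j d = (\<Sum>m=1..d. prime_power_sum j m * char_sum j (d - m))"
proof -
  define F where "F = (\<lambda>(P, k). of_nat (degree P) * xi_char j P ^ k * char_sum j (d - k * degree P))"
  have "of_nat d * char_sum j d
      = (\<Sum>f\<in>monics d. \<Sum>(P, k)\<in>{(P, k) \<in> prime_powers_upto d. P ^ k dvd f}. of_nat (degree P) * xi_char j f)"
    unfolding char_sum_def sum_distrib_left
    by (intro sum.cong refl, subst (1) degree_eq_sum_prime_powers_upto)
      (simp_all add: sum_distrib_right case_prod_unfold)
  also have "\<dots> = (\<Sum>(P, k)\<in>prime_powers_upto d. \<Sum>f\<in>{f \<in> monics d. P ^ k dvd f}. of_nat (degree P) * xi_char j f)"
    using sum.swap_restrict [OF finite_monics finite_prime_powers_upto,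
        where g = "\<lambda>f (P, k). of_nat (degree P) * xi_char j f" and R = "\<lambda>f (P, k). P ^ k dvd f"]
    by (simp add: case_prod_unfold)
  also have "\<dots> = (\<Sum>x\<in>prime_powers_upto d. F x)"
    unfolding F_def
    by (intro sum.cong refl) (auto simp: prime_powers_upto_def sum_xi_char_multiples simp flip: sum_distrib_left)
  also have "\<dots> = (\<Sum>m=1..d. \<Sum>x\<in>{x \<in> prime_powers_upto d. snd x * degree (fst x) = m}. F x)"
  proof (rule sum.group [symmetric, OF finite_prime_powers_upto finite_atLeastAtMost])
    show "(\<lambda>x. snd x * degree (fst x)) ` prime_powers_upto d \<subseteq> {1..d}"
      by (auto simp: prime_powers_upto_def dest!: irreducible_degree_pos)
  qed
  also have "\<dots> = (\<Sum>m=1..d. prime_power_sum j m * char_sum j (d - m))"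
  proof (intro sum.cong refl)
    fix m
    assume "m \<in> {1..d}"
    then have "{x \<in> prime_powers_upto d. snd x * degree (fst x) = m} = prime_powers_of_degree m"
      by (auto simp: prime_powers_upto_def prime_powers_of_degree_def)
    then show "(\<Sum>x\<in>{x \<in> prime_powers_upto d. snd x * degree (fst x) = m}. F x)
        = prime_power_sum j m * char_sum j (d - m)"
      by (auto simp: F_def prime_power_sum_def prime_powers_of_degree_def sum_distrib_right intro!: sum.cong)
  qed
  finally show ?thesis .
qed

lemma prime_power_sum_nontrivial:
  assumes "\<not> 4 dvd j" "1 \<le> m"
  shows "prime_power_sum j m = - ((- (1 + \<i> ^ j)) ^ m)"
  using assms(2)
proof (induction m rule: dec_induct)
  case base
  show ?case
    using degree_weighted_char_sum [of 1 j] char_sum_1 [of j] by (simp add: char_sum_0)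
next
  case (step d)
  have "0 = (\<Sum>m=1..Suc d. prime_power_sum j m * char_sum j (Suc d - m))"
    using degree_weighted_char_sum [of "Suc d" j] step.hyps char_sum_nontrivial [OF _ assms(1)] by simp
  also have "\<dots> = (\<Sum>m\<in>{d, Suc d}. prime_power_sum j m * char_sum j (Suc d - m))"
    using step.hyps char_sum_nontrivial [OF _ assms(1)]
    by (intro sum.mono_neutral_right) auto
  also have "\<dots> = prime_power_sum j d * (1 + \<i> ^ j) + prime_power_sum j (Suc d)"
    using char_sum_1 [of j] by (simp add: char_sum_0 Suc_diff_le)
  finally have "prime_power_sum j (Suc d) = - (1 + \<i> ^ j) * prime_power_sum j d"
    by (simp add: algebra_simps eq_neg_iff_add_eq_0)
  with step.IH show ?case
    by simp
qed

lemma prime_power_sum_trivial: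
  assumes "4 dvd j" "1 \<le> m"
  shows "prime_power_sum j m = 2 ^ m"
  using assms(2)
proof (induction m rule: less_induct)
  case (less m)
  have "of_nat m * 2 ^ m = (\<Sum>i=1..m. prime_power_sum j i * 2 ^ (m - i))"
    using degree_weighted_char_sum [of m j] by (simp add: char_sum_trivial [OF assms(1)])
  also have "\<dots> = prime_power_sum j m + (\<Sum>i=1..<m. prime_power_sum j i * 2 ^ (m - i))"
    using less.prems by (simp add: sum.last_plus add.commute)
  also have "(\<Sum>i=1..<m. prime_power_sum j i * 2 ^ (m - i)) = (\<Sum>i=1..<m. 2 ^ m)"
    using less.IH by (intro sum.cong refl) (simp flip: power_add)
  finally have "of_nat m * 2 ^ m = prime_power_sum j m + of_nat (m - 1) * (2 :: complex) ^ m"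
    by simp
  moreover have "of_nat m = of_nat (m - 1) + (1 :: complex)"
    using less.prems by (simp add: of_nat_diff)
  ultimately show ?case
    by (simp add: algebra_simps)
qed

lemma prime_power_sum_mod_4:
  assumes "1 \<le> m"
  shows "j mod 4 = 0 \<Longrightarrow> prime_power_sum j m = 2 ^ m"
    and "j mod 4 = 1 \<Longrightarrow> prime_power_sum j m = - ((-1) ^ m * (1 + \<i>) ^ m)"
    and "j mod 4 = 2 \<Longrightarrow> prime_power_sum j m = 0"
    and "j mod 4 = 3 \<Longrightarrow> prime_power_sum j m = - ((-1) ^ m * (1 - \<i>) ^ m)"
proof -
  have nontrivial: "prime_power_sum j m = - ((-1) ^ m * (1 + \<i> ^ (j mod 4)) ^ m)" if "j mod 4 \<noteq> 0"
  proof -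
    have "prime_power_sum j m = - ((- (1 + \<i> ^ j)) ^ m)"
      using that by (intro prime_power_sum_nontrivial assms) (simp add: dvd_eq_mod_eq_0)
    then show ?thesis
      by (simp only: power_i_mod_4 [of j] power_minus [of "1 + \<i> ^ (j mod 4)"])
  qed
  show "j mod 4 = 0 \<Longrightarrow> prime_power_sum j m = 2 ^ m"
    using prime_power_sum_trivial [OF _ assms] by (simp add: dvd_eq_mod_eq_0)
  show "j mod 4 = 1 \<Longrightarrow> prime_power_sum j m = - ((-1) ^ m * (1 + \<i>) ^ m)"
    using nontrivial by simp
  show "j mod 4 = 2 \<Longrightarrow> prime_power_sum j m = 0"
    using nontrivial assms by simp
  have "\<i> ^ 3 = - \<i>"
    by (simp add: power3_eq_cube)
  then show "j mod 4 = 3 \<Longrightarrow> prime_power_sum j m = - ((-1) ^ m * (1 - \<i>) ^ m)"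
    using nontrivial by simp
qed

definition irreducible_char_sum :: "nat \<Rightarrow> nat \<Rightarrow> complex" where
  "irreducible_char_sum j e = (\<Sum>P\<in>irreducibles e. xi_char j P)"

lemma prime_power_sum_eq_divisor_sum:
  assumes "1 \<le> m"
  shows "prime_power_sum j m = (\<Sum>e | e dvd m. of_nat e * irreducible_char_sum (j * (m div e)) e)"
proof -
  let ?h = "\<lambda>(e, P). (P, m div e)"
  have inj: "inj_on ?h (Sigma {e. e dvd m} irreducibles)"
    by (auto intro!: inj_onI simp: irreducibles_def)
  have image: "prime_powers_of_degree m = ?h ` Sigma {e. e dvd m} irreducibles"
  proof safe
    fix P k
    assume "(P, k) \<in> prime_powers_of_degree m"
    then have P: "irreducible P" "k * degree P = m"
      by (auto simp: prime_powers_of_degree_def)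
    then have "m div degree P = k"
      using irreducible_degree_pos [OF P(1)] by auto
    with P show "(P, k) \<in> ?h ` Sigma {e. e dvd m} irreducibles"
      by (intro image_eqI [of _ _ "(degree P, P)"]) (auto simp: irreducibles_def)
  next
    fix e P
    assume "e dvd m" "P \<in> irreducibles e"
    with assms show "(P, m div e) \<in> prime_powers_of_degree m"
      by (auto simp: prime_powers_of_degree_def irreducibles_def Suc_le_eq div_greater_zero_iff
          intro: dvd_imp_le)
  qed
  have "prime_power_sum j m = (\<Sum>(e, P)\<in>Sigma {e. e dvd m} irreducibles. of_nat e * xi_char j P ^ (m div e))"
    unfolding prime_power_sum_def image sum.reindex [OF inj]
    by (intro sum.cong refl) (auto simp: irreducibles_def)
  also have "\<dots> = (\<Sum>e | e dvd m. of_nat e * irreducible_char_sum (j * (m div e)) e)"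
    using assms
    by (simp add: sum.Sigma [symmetric] finite_irreducibles irreducible_char_sum_def sum_distrib_left power_xi_char)
  finally show ?thesis .
qed

lemma irreducible_char_sum_moebius:
  assumes "1 \<le> n"
  shows "of_nat n * irreducible_char_sum j n
    = (\<Sum>k | k dvd n. of_int (moebius k) * prime_power_sum (j * k) (n div k))"
proof -
  have "prime_power_sum (j * k) (n div k)
      = (\<Sum>e | e dvd n div k. of_nat e * irreducible_char_sum (j * (n div e)) e)" if "k dvd n" for k
  proof -
    have "k * (n div k div e) = n div e" if e_dvd: "e dvd n div k" for e
    proof -
      obtain a where a: "n = k * a" and "0 < k"
        using \<open>k dvd n\<close> assms by (auto elim!: dvdE intro: gr0I)
      moreover obtain b where "a = e * b"
        using e_dvd a \<open>0 < k\<close> by (auto elim: dvdE)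
      ultimately show ?thesis
        by (cases "e = 0") auto
    qed
    moreover have "1 \<le> n div k"
      using that assms by (auto simp: Suc_le_eq div_greater_zero_iff dvd_imp_le)
    ultimately show ?thesis
      by (simp add: prime_power_sum_eq_divisor_sum mult.assoc)
  qed
  then show ?thesis
    using moebius_inversion [OF assms, of "\<lambda>e. of_nat e * irreducible_char_sum (j * (n div e)) e"]
    using assms by simp
qed

section \<open>Counting irreducibles by class\<close>

lemma card_irreducibles_xi_index:
  assumes "t \<le> 3"
  shows "of_nat (4 * card {P \<in> irreducibles n. xi_index P = t})
    = (\<Sum>j<4. \<i> ^ (j * (4 - t)) * irreducible_char_sum j n)"
proof -
  have "(\<Sum>j<4. \<i> ^ (j * (4 - t)) * irreducible_char_sum j n)
      = (\<Sum>P\<in>irreducibles n. \<Sum>j<4. \<i> ^ (j * (4 - t + xi_index P)))"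
    unfolding irreducible_char_sum_def sum_distrib_left xi_char_def
    by (subst sum.swap) (simp add: distrib_left power_add)
  also have "\<dots> = (\<Sum>P\<in>irreducibles n. if xi_index P = t then 4 else 0)"
  proof (intro sum.cong refl)
    fix P
    have "4 dvd (4 - t + xi_index P) \<longleftrightarrow> xi_index P = t"
      using assms xi_index_le_3 [of P] by presburger
    then show "(\<Sum>j<4. \<i> ^ (j * (4 - t + xi_index P))) = (if xi_index P = t then 4 else 0)"
      by (simp add: sum_power_i)
  qed
  also have "\<dots> = of_nat (4 * card {P \<in> irreducibles n. xi_index P = t})"
    by (simp add: sum.If_cases finite_irreducibles Int_def)
  finally show ?thesis ..
qed

lemma I2_eq_card_xi_index:
  assumes "t \<le> 3"
  shows "I2 n (of_nat (t mod 2)) (of_nat (t div 2)) = card {P \<in> irreducibles n. xi_index P = t}"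
proof -
  have "icoeff f (int n - int i) = coeff (reflect_poly f) i" if "degree f = n" "i \<in> {1, 2}" for f :: "bit poly" and i
    using that by (auto simp: icoeff_def coeff_reflect_poly nat_diff_distrib)
  then have "icoeff f (int n - 1) = coeff (reflect_poly f) 1" "icoeff f (int n - 2) = coeff (reflect_poly f) 2"
    if "degree f = n" for f :: "bit poly"
    using that by (metis insertCI of_nat_1 of_nat_numeral)+
  then show ?thesis
    unfolding I2_def irreducibles_def
    by (intro arg_cong [where f = card])
      (auto simp: xi_index_eq_iff [OF assms] intro!: lead_coeff_bit_poly)
qed

definition twisted_sum :: "nat \<Rightarrow> nat \<Rightarrow> nat \<Rightarrow> complex" where
  "twisted_sum t k m = (\<Sum>j<4. \<i> ^ (j * (4 - t)) * prime_power_sum (j * k) m)"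

lemma card_irreducibles_xi_index_moebius:
  assumes "1 \<le> n" "t \<le> 3"
  shows "of_nat (4 * n * card {P \<in> irreducibles n. xi_index P = t})
    = (\<Sum>k | k dvd n. of_int (moebius k) * twisted_sum t k (n div k))"
proof -
  have "of_nat (4 * n * card {P \<in> irreducibles n. xi_index P = t})
      = (\<Sum>j<4. \<i> ^ (j * (4 - t)) * (of_nat n * irreducible_char_sum j n))"
    using card_irreducibles_xi_index [OF assms(2), of n]
    by (simp add: sum_distrib_left mult_ac)
  also have "\<dots> = (\<Sum>j<4. \<Sum>k | k dvd n. \<i> ^ (j * (4 - t)) * (of_int (moebius k) * prime_power_sum (j * k) (n div k)))"
    by (simp add: irreducible_char_sum_moebius [OF assms(1)] sum_distrib_left)
  also have "\<dots> = (\<Sum>k | k dvd n. of_int (moebius k) * twisted_sum t k (n div k))"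
    by (subst sum.swap) (simp add: twisted_sum_def sum_distrib_left mult_ac)
  finally show ?thesis .
qed

lemma twisted_sum_expand:
  "twisted_sum t k m = prime_power_sum 0 m + \<i> ^ (4 - t) * prime_power_sum k m
    + (\<i> ^ (4 - t)) ^ 2 * prime_power_sum (2 * k) m + (\<i> ^ (4 - t)) ^ 3 * prime_power_sum (3 * k) m"
proof -
  have "{..<4 :: nat} = {0, 1, 2, 3}"
    by auto
  then show ?thesis
    by (simp add: twisted_sum_def power_mult [symmetric] mult.commute add.assoc)
qed

lemma twisted_sum_residue_0:
  assumes "k mod 4 = 0" "1 \<le> m" "t \<le> 3"
  shows "twisted_sum t k m = of_real (if t = 0 then 4 * 2 ^ m else 0)"
proof -
  have "(j * k) mod 4 = 0" for j
    using assms(1) by (simp add: mod_mult_right_eq [symmetric])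
  then have "twisted_sum t k m = 2 ^ m * (\<Sum>j<4. \<i> ^ (j * (4 - t)))"
    by (simp add: twisted_sum_def prime_power_sum_mod_4(1) [OF assms(2)] sum_distrib_left mult.commute)
  moreover have "4 dvd (4 - t) \<longleftrightarrow> t = 0"
    using assms(3) by presburger
  ultimately show ?thesis
    by (simp add: sum_power_i)
qed

lemma twisted_sum_residue_2:
  assumes "k mod 4 = 2" "1 \<le> m" "t \<le> 3"
  shows "twisted_sum t k m = of_real (if even t then 2 * 2 ^ m else 0)"
proof -
  have "(2 * k) mod 4 = 0" "(3 * k) mod 4 = 2"
    using assms(1) by presburger+
  then have "twisted_sum t k m = 2 ^ m * (1 + (\<i> ^ (4 - t)) ^ 2)"
    using assms(1) by (simp add: twisted_sum_expand prime_power_sum_mod_4 [OF assms(2)] algebra_simps)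
  also have "(\<i> ^ (4 - t)) ^ 2 = (-1) ^ (4 - t)"
    by (simp add: power_mult [symmetric])
  also have "(-1 :: complex) ^ (4 - t) = (if even t then 1 else -1)"
    using assms(3) by (simp add: even_diff_nat)
  finally show ?thesis
    by simp
qed

lemma twisted_sum_residue_1:
  assumes "k mod 4 = 1" "1 \<le> m" "t \<le> 3"
  shows "twisted_sum t k m
    = of_real (2 ^ m - (-1) ^ m * (2 * sqrt 2 ^ m * cos (- (real t * pi / 2) + real m * pi / 4)))"
proof -
  have "(2 * k) mod 4 = 2" "(3 * k) mod 4 = 3"
    using assms(1) by presburger+
  then have "twisted_sum t k m
      = 2 ^ m - (-1) ^ m * (\<i> ^ (4 - t) * (1 + \<i>) ^ m + (\<i> ^ (4 - t)) ^ 3 * (1 - \<i>) ^ m)"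
    using assms(1) by (simp add: twisted_sum_expand prime_power_sum_mod_4 [OF assms(2)] algebra_simps)
  also have "\<i> ^ (4 - t) * (1 + \<i>) ^ m + (\<i> ^ (4 - t)) ^ 3 * (1 - \<i>) ^ m
      = of_real (2 * sqrt 2 ^ m * cos (- (real t * pi / 2) + real m * pi / 4))"
    using cis_one_plus_i_power_add_conj [of "- (real t * pi / 2)" m]
    by (subst power_i_4_minus(2) [OF assms(3)], subst power_i_4_minus(1) [OF assms(3)]) simp
  finally show ?thesis
    by simp
qed

lemma twisted_sum_residue_3:
  assumes "k mod 4 = 3" "1 \<le> m" "t \<le> 3"
  shows "twisted_sum t k m
    = of_real (2 ^ m - (-1) ^ m * (2 * sqrt 2 ^ m * cos (real t * pi / 2 + real m * pi / 4)))"
proof -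
  have "(2 * k) mod 4 = 2" "(3 * k) mod 4 = 1"
    using assms(1) by presburger+
  then have "twisted_sum t k m
      = 2 ^ m - (-1) ^ m * ((\<i> ^ (4 - t)) ^ 3 * (1 + \<i>) ^ m + \<i> ^ (4 - t) * (1 - \<i>) ^ m)"
    using assms(1) by (simp add: twisted_sum_expand prime_power_sum_mod_4 [OF assms(2)] algebra_simps)
  also have "(\<i> ^ (4 - t)) ^ 3 * (1 + \<i>) ^ m + \<i> ^ (4 - t) * (1 - \<i>) ^ m
      = of_real (2 * sqrt 2 ^ m * cos (real t * pi / 2 + real m * pi / 4))"
    using cis_one_plus_i_power_add_conj [of "real t * pi / 2" m]
    by (subst power_i_4_minus(2) [OF assms(3)], subst power_i_4_minus(1) [OF assms(3)]) simp
  finally show ?thesis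
    by simp
qed

definition divisor_term :: "nat \<Rightarrow> nat \<Rightarrow> nat \<Rightarrow> real" where
  "divisor_term n t k = iv (t = 0) * (iv (4 dvd k) * 2 ^ (n div k))
   + iv (2 dvd t) * (iv ((4::int) dvd (int k - 2)) * 2 powr (real (n div k) - 1))
   + iv ((4::int) dvd (int k - 1)) *
        (2 powr (real (n div k) - 2) - (-1) ^ (n div k) * 2 powr (real n / (2 * real k) - 1)
           * cos ((real (n div k) - 2 * real t) / 4 * pi))
   + iv ((4::int) dvd (int k + 1)) *
        (2 powr (real (n div k) - 2) - (-1) ^ (n div k) * 2 powr (real n / (2 * real k) - 1)
           * cos ((real (n div k) + 2 * real t) / 4 * pi))"

lemma dvd_4_iff_mod_4:
  fixes k :: nat
  shows "4 dvd k \<longleftrightarrow> k mod 4 = 0"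
    and "(4::int) dvd int k - 2 \<longleftrightarrow> k mod 4 = 2"
    and "(4::int) dvd int k - 1 \<longleftrightarrow> k mod 4 = 1"
    and "(4::int) dvd int k + 1 \<longleftrightarrow> k mod 4 = 3"
  by presburger+

lemma powr_divisor_exponents:
  assumes "k dvd n" "0 < k"
  shows "2 powr (real (n div k) - 1) = 2 ^ (n div k) / 2"
    and "2 powr (real (n div k) - 2) = 2 ^ (n div k) / 4"
    and "2 powr (real n / (2 * real k) - 1) = sqrt 2 ^ (n div k) / 2"
proof -
  have quotient: "real n / (2 * real k) = real (n div k) / 2"
    using assms by (simp add: real_of_nat_div)
  show "2 powr (real n / (2 * real k) - 1) = sqrt 2 ^ (n div k) / 2"
    unfolding quotient by (simp add: powr_diff powr_half_sqrt [symmetric] powr_powr [symmetric] powr_power)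
qed (simp_all add: powr_diff powr_realpow)

lemma twisted_sum_eq_divisor_term:
  assumes "1 \<le> n" "k dvd n" "t \<le> 3"
  shows "twisted_sum t k (n div k) = of_real (4 * divisor_term n t k)"
proof -
  define m where "m = n div k"
  have "0 < k" "1 \<le> m"
    using assms by (auto simp: m_def Suc_le_eq div_greater_zero_iff dvd_imp_le intro: gr0I)
  note powers = powr_divisor_exponents [OF assms(2) \<open>0 < k\<close>, folded m_def]
  have "k mod 4 = 0 \<or> k mod 4 = 1 \<or> k mod 4 = 2 \<or> k mod 4 = 3"
    by presburger
  then show ?thesis
  proof (elim disjE)
    assume "k mod 4 = 0"
    with \<open>1 \<le> m\<close> assms(3) show ?thesis
      by (simp add: twisted_sum_residue_0 divisor_term_def iv_def dvd_4_iff_mod_4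
          flip: m_def)
  next
    assume "k mod 4 = 2"
    with \<open>1 \<le> m\<close> assms(3) show ?thesis
      by (simp add: twisted_sum_residue_2 divisor_term_def iv_def dvd_4_iff_mod_4
          powers flip: m_def)
  next
    assume r: "k mod 4 = 1"
    have arg: "(real m - 2 * real t) / 4 * pi = - (real t * pi / 2) + real m * pi / 4"
      by (simp add: field_simps)
    have "4 * divisor_term n t k = 2 ^ m - (-1) ^ m * (2 * sqrt 2 ^ m * cos (- (real t * pi / 2) + real m * pi / 4))"
      using r unfolding divisor_term_def m_def [symmetric] arg powers
      by (simp add: iv_def dvd_4_iff_mod_4)
    with r \<open>1 \<le> m\<close> assms(3) show ?thesis
      by (simp add: twisted_sum_residue_1 flip: m_def)
  next
    assume r: "k mod 4 = 3"
    have arg: "(real m + 2 * real t) / 4 * pi = real t * pi / 2 + real m * pi / 4"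
      by (simp add: field_simps)
    have "4 * divisor_term n t k = 2 ^ m - (-1) ^ m * (2 * sqrt 2 ^ m * cos (real t * pi / 2 + real m * pi / 4))"
      using r unfolding divisor_term_def m_def [symmetric] arg powers
      by (simp add: iv_def dvd_4_iff_mod_4)
    with r \<open>1 \<le> m\<close> assms(3) show ?thesis
      by (simp add: twisted_sum_residue_3 flip: m_def)
  qed
qed

lemma card_irreducibles_xi_index_eq_sum_divisor_term:
  assumes "1 \<le> n" "t \<le> 3"
  shows "real (card {P \<in> irreducibles n. xi_index P = t})
    = 1 / real n * (\<Sum>k | k dvd n. real_of_int (moebius k) * divisor_term n t k)"
proof -
  have "complex_of_real (4 * real n * real (card {P \<in> irreducibles n. xi_index P = t}))
      = (\<Sum>k | k dvd n. of_int (moebius k) * twisted_sum t k (n div k))"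
    using card_irreducibles_xi_index_moebius [OF assms] by simp
  also have "\<dots> = complex_of_real (4 * (\<Sum>k | k dvd n. real_of_int (moebius k) * divisor_term n t k))"
    using twisted_sum_eq_divisor_term [OF assms(1) _ assms(2)] by (simp add: sum_distrib_left mult_ac)
  finally show ?thesis
    using assms(1) by (simp only: of_real_eq_iff) (simp add: field_simps)
qed

theorem proposition2:
  fixes n t :: nat
  assumes "n \<ge> 1" and "t \<le> 3"
  shows "real (I2 n (of_nat (t mod 2)) (of_nat (t div 2))) =
     iv (t = 0) / real n * (\<Sum>k | k dvd n. iv (4 dvd k) * real_of_int (moebius k) * 2 ^ (n div k))
   + iv (2 dvd t) / real n * (\<Sum>k | k dvd n. iv ((4::int) dvd (int k - 2)) * real_of_int (moebius k) * 2 powr (real (n div k) - 1))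
   + 1 / real n * (\<Sum>k | k dvd n. iv ((4::int) dvd (int k - 1)) * real_of_int (moebius k) *
        (2 powr (real (n div k) - 2) - (-1) ^ (n div k) * 2 powr (real n / (2 * real k) - 1)
           * cos ((real (n div k) - 2 * real t) / 4 * pi)))
   + 1 / real n * (\<Sum>k | k dvd n. iv ((4::int) dvd (int k + 1)) * real_of_int (moebius k) *
        (2 powr (real (n div k) - 2) - (-1) ^ (n div k) * 2 powr (real n / (2 * real k) - 1)
           * cos ((real (n div k) + 2 * real t) / 4 * pi)))"
proof -
  let ?D = "{k. k dvd n}"
  define A where "A k = iv (4 dvd k) * real_of_int (moebius k) * 2 ^ (n div k)" for k
  define B where "B k = iv ((4::int) dvd (int k - 2)) * real_of_int (moebius k) * 2 powr (real (n div k) - 1)" for k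
  define C where "C k = iv ((4::int) dvd (int k - 1)) * real_of_int (moebius k) *
    (2 powr (real (n div k) - 2) - (-1) ^ (n div k) * 2 powr (real n / (2 * real k) - 1)
       * cos ((real (n div k) - 2 * real t) / 4 * pi))" for k
  define C' where "C' k = iv ((4::int) dvd (int k + 1)) * real_of_int (moebius k) *
    (2 powr (real (n div k) - 2) - (-1) ^ (n div k) * 2 powr (real n / (2 * real k) - 1)
       * cos ((real (n div k) + 2 * real t) / 4 * pi))" for k
  have "(\<Sum>k\<in>?D. real_of_int (moebius k) * divisor_term n t k)
      = (\<Sum>k\<in>?D. iv (t = 0) * A k + iv (2 dvd t) * B k + C k + C' k)"
    by (intro sum.cong refl) (simp add: divisor_term_def A_def B_def C_def C'_def algebra_simps)
  also have "\<dots> = iv (t = 0) * sum A ?D + iv (2 dvd t) * sum B ?D + sum C ?D + sum C' ?D"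
    by (simp add: sum.distrib sum_distrib_left)
  finally show ?thesis
    using I2_eq_card_xi_index [OF assms(2)] card_irreducibles_xi_index_eq_sum_divisor_term [OF assms]
    by (simp add: A_def B_def C_def C'_def add_divide_distrib algebra_simps)
qed

end
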